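(* Let $0<\alpha\le 1$ and let $G$ be the differential (Helmholtz) filter on $L^2(\Omega)^d$ with filter radius $\delta>0$. Then the operators $D_\alpha=[(1-\alpha)G+\alpha I]^{-1}$, $D_\alpha G$ and $I-D_\alpha G$ are bounded linear operators on $L^2(\Omega)^d$, and $$\|D_\alpha\|\le\frac{1}{\alpha},\qquad \|D_\alpha G\|\le 1,\qquad \|I-D_\alpha G\|\le 1,$$ where $\|\cdot\|$ denotes the operator norm induced by the $L^2(\Omega)^d$ norm.
   Context: Let $\Omega\subset\mathbb{R}^n$ be a regular, bounded, polyhedral domain, $d\ge1$, and let $\|\cdot\|$, $(\cdot,\cdot)$ denote the $L^2(\Omega)^d$ norm and inner product. Let $X=H^1_0(\Omega)^d$. Fix $\delta>0$. The differential filter $G:L^2(\Omega)^d\to X$ is defined by $Gu=\bar u$, where $\bar u\in X$ is the unique solution of $\delta^2(\nabla\bar u,\nabla v)+(\bar u,v)=(u,v)$ for all $v\in X$ (the weak form of $-\delta^2\Delta\bar u+\bar u=u$ in $\Omega$, $\bar u=0$ on $\partial\Omega$). Regarded as an operator on $L^2(\Omega)^d$, $G$ is bounded, self-adjoint, injective and satisfies $0\le (Gv,v)\le \|v\|^2$. *)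

theory Defs
  imports "HOL-Analysis.Analysis"
begin

text \<open>Abstract interface of the differential (Helmholtz) filter G on the real
Hilbert space L2(Omega)^d: bounded, linear, self-adjoint, injective and
0 <= (Gv,v) <= norm v squared.\<close>

definition helmholtz_filter_like :: "('a::real_inner \<Rightarrow> 'a) \<Rightarrow> bool" where
  "helmholtz_filter_like G \<longleftrightarrow>
     bounded_linear G \<and>
     (\<forall>u v. inner (G u) v = inner u (G v)) \<and>
     inj G \<and>
     (\<forall>v. 0 \<le> inner (G v) v \<and> inner (G v) v \<le> (norm v)\<^sup>2)"

end

theory Submission
  imports Defs
begin

text \<open>Writing \<open>a = v\<bullet>v\<close>, \<open>b = Gv\<bullet>v\<close>, \<open>c = Gv\<bullet>Gv\<close> for a positive contraction
\<open>G\<close> one has \<open>0 \<le> c \<le> b \<le> a\<close>, and the relaxed filter \<open>A = (1 - \<alpha>)G + \<alpha>I\<close>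
satisfies \<open>|Av|\<^sup>2 = \<alpha>\<^sup>2a + 2\<alpha>(1 - \<alpha>)b + (1 - \<alpha>)\<^sup>2c\<close>. This single identity bounds
\<open>|Av|\<close> from below by \<open>\<alpha>|v|\<close>, by \<open>|Gv|\<close> and by \<open>\<alpha>|v - Gv|\<close>. The first bound makes
\<open>A\<close> injective with \<open>|A\<^sup>-\<^sup>1| \<le> 1/\<alpha>\<close>; surjectivity comes from Banach's fixed
point theorem, since \<open>Av = f\<close> iff \<open>v = f + (1 - \<alpha>)(v - Gv)\<close> and \<open>I - G\<close> is
non-expansive. As \<open>A\<close> commutes with \<open>G\<close>, so does \<open>D = A\<^sup>-\<^sup>1\<close>; putting \<open>v = Dw\<close>
gives \<open>DGw = Gv\<close> and \<open>w - DGw = \<alpha>(v - Gv)\<close>, and the other two bounds yield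
\<open>|DGw| \<le> |w|\<close> and \<open>|w - DGw| \<le> |w|\<close>.\<close>

lemma linear_inv:
  assumes "linear f" and "bij f"
  shows "linear (inv f)"
  using assms by (auto simp: linear_iff bij_is_surj bij_is_inj surj_f_inv_f intro!: inv_f_eq)

lemma bounded_linear_onorm_le:
  fixes f :: "'a::real_normed_vector \<Rightarrow> 'b::real_normed_vector"
  assumes "linear f" and "0 \<le> K" and "\<And>x. norm (f x) \<le> K * norm x"
  shows "bounded_linear f" and "onorm f \<le> K"
proof -
  show "bounded_linear f"
    using assms(1)
  proof (rule bounded_linear.intro)
    show "bounded_linear_axioms f"
      using assms(3) unfolding bounded_linear_axioms_def by (metis mult.commute)
  qed
  show "onorm f \<le> K"
    using assms(2,3) by (rule onorm_bound)
qed

definition relaxed_filter :: "real \<Rightarrow> ('a::real_vector \<Rightarrow> 'a) \<Rightarrow> 'a \<Rightarrow> 'a" where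
  "relaxed_filter \<alpha> G v = (1 - \<alpha>) *\<^sub>R G v + \<alpha> *\<^sub>R v"

locale positive_contraction =
  fixes G :: "'a::real_inner \<Rightarrow> 'a"
  assumes linear: "linear G"
    and selfadjoint: "G u \<bullet> v = u \<bullet> G v"
    and inner_nonneg: "0 \<le> G v \<bullet> v"
    and inner_le: "G v \<bullet> v \<le> v \<bullet> v"
begin

lemma inner_G_G_le: "G v \<bullet> G v \<le> G v \<bullet> v"
proof -
  interpret linear G by (rule linear)
  have "0 \<le> G (v - G v) \<bullet> (v - G v)" by (rule inner_nonneg)
  also have "\<dots> = G v \<bullet> v - 2 * (G v \<bullet> G v) + G (G v) \<bullet> G v"
    using selfadjoint[of v "G v"] by (simp add: diff inner_diff_left inner_diff_right inner_commute)
  finally show ?thesis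
    using inner_le[of "G v"] by linarith
qed

lemma norm_diff_G_le: "norm (v - G v) \<le> norm v"
proof -
  have "(v - G v) \<bullet> (v - G v) = v \<bullet> v - 2 * (G v \<bullet> v) + G v \<bullet> G v"
    by (simp add: inner_diff_left inner_diff_right inner_commute)
  also have "\<dots> \<le> v \<bullet> v"
    using inner_G_G_le[of v] inner_nonneg[of v] by linarith
  finally show ?thesis by (simp add: norm_le)
qed

lemma linear_relaxed_filter: "linear (relaxed_filter \<alpha> G)"
proof -
  interpret linear G by (rule linear)
  show ?thesis
    by (rule linearI) (simp_all add: relaxed_filter_def add scale algebra_simps)
qed

lemma relaxed_filter_G_commute: "relaxed_filter \<alpha> G (G v) = G (relaxed_filter \<alpha> G v)"
proof -
  interpret linear G by (rule linear)
  show ?thesis by (simp add: relaxed_filter_def add scale)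
qed

lemma inner_relaxed_filter_self:
  "relaxed_filter \<alpha> G v \<bullet> relaxed_filter \<alpha> G v
     = \<alpha>\<^sup>2 * (v \<bullet> v) + 2 * \<alpha> * (1 - \<alpha>) * (G v \<bullet> v) + (1 - \<alpha>)\<^sup>2 * (G v \<bullet> G v)"
  by (simp add: relaxed_filter_def inner_add_left inner_add_right inner_commute
      power2_eq_square algebra_simps)

context
  fixes \<alpha> :: real
  assumes \<alpha>_pos: "0 < \<alpha>" and \<alpha>_le_1: "\<alpha> \<le> 1"
begin

lemma norm_le_norm_relaxed_filter: "\<alpha> * norm v \<le> norm (relaxed_filter \<alpha> G v)"
proof -
  have "(\<alpha> *\<^sub>R v) \<bullet> (\<alpha> *\<^sub>R v) \<le> relaxed_filter \<alpha> G v \<bullet> relaxed_filter \<alpha> G v"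
    unfolding inner_relaxed_filter_self
    using inner_nonneg[of v] \<alpha>_pos \<alpha>_le_1
    by (simp add: power2_eq_square add_nonneg_nonneg)
  then have "norm (\<alpha> *\<^sub>R v) \<le> norm (relaxed_filter \<alpha> G v)"
    by (simp only: norm_le)
  then show ?thesis
    using \<alpha>_pos by simp
qed

lemma norm_G_le_norm_relaxed_filter: "norm (G v) \<le> norm (relaxed_filter \<alpha> G v)"
proof -
  have c_le_b: "G v \<bullet> G v \<le> G v \<bullet> v" and b_le_a: "G v \<bullet> v \<le> v \<bullet> v"
    using inner_G_G_le inner_le by auto
  have "\<alpha>\<^sup>2 * (G v \<bullet> G v) \<le> \<alpha>\<^sup>2 * (v \<bullet> v)"
    using c_le_b b_le_a by (intro mult_left_mono) auto
  moreover have "2 * \<alpha> * (1 - \<alpha>) * (G v \<bullet> G v) \<le> 2 * \<alpha> * (1 - \<alpha>) * (G v \<bullet> v)"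
    using c_le_b \<alpha>_pos \<alpha>_le_1 by (intro mult_left_mono) auto
  ultimately have "G v \<bullet> G v \<le> relaxed_filter \<alpha> G v \<bullet> relaxed_filter \<alpha> G v"
    unfolding inner_relaxed_filter_self by (simp add: power2_eq_square algebra_simps)
  then show ?thesis by (simp add: norm_le)
qed

lemma norm_diff_G_le_norm_relaxed_filter:
  "\<alpha> * norm (v - G v) \<le> norm (relaxed_filter \<alpha> G v)"
proof -
  have c_le_b: "G v \<bullet> G v \<le> G v \<bullet> v" and c_nonneg: "0 \<le> G v \<bullet> G v"
    using inner_G_G_le by auto
  have "(2 * \<alpha> - 1) * (G v \<bullet> G v) \<le> 2 * \<alpha> * (G v \<bullet> v)"
  proof -
    have "(2 * \<alpha> - 1) * (G v \<bullet> G v) \<le> 2 * \<alpha> * (G v \<bullet> G v)"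
      using c_nonneg by (simp add: algebra_simps)
    also have "\<dots> \<le> 2 * \<alpha> * (G v \<bullet> v)"
      using c_le_b \<alpha>_pos by (intro mult_left_mono) auto
    finally show ?thesis .
  qed
  then have "(\<alpha> *\<^sub>R (v - G v)) \<bullet> (\<alpha> *\<^sub>R (v - G v))
      \<le> relaxed_filter \<alpha> G v \<bullet> relaxed_filter \<alpha> G v"
    unfolding inner_relaxed_filter_self
    by (simp add: inner_diff_left inner_diff_right inner_commute power2_eq_square algebra_simps)
  then have "norm (\<alpha> *\<^sub>R (v - G v)) \<le> norm (relaxed_filter \<alpha> G v)"
    by (simp only: norm_le)
  then show ?thesis
    using \<alpha>_pos by simp
qed

lemma inj_relaxed_filter: "inj (relaxed_filter \<alpha> G)"
proof -
  interpret linear "relaxed_filter \<alpha> G" by (rule linear_relaxed_filter)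
  show ?thesis
    unfolding inj_iff_eq_0
    using norm_le_norm_relaxed_filter \<alpha>_pos
    by (metis mult_le_0_iff norm_eq_zero norm_ge_zero order_antisym_conv linorder_not_le)
qed

context
  assumes surj: "surj (relaxed_filter \<alpha> G)"
begin

lemma linear_inv_relaxed_filter: "linear (inv (relaxed_filter \<alpha> G))"
  using linear_relaxed_filter inj_relaxed_filter surj by (simp add: linear_inv bij_def)

lemma relaxed_filter_inv: "relaxed_filter \<alpha> G (inv (relaxed_filter \<alpha> G) w) = w"
  using surj by (rule surj_f_inv_f)

lemma norm_inv_relaxed_filter_le: "norm (inv (relaxed_filter \<alpha> G) w) \<le> norm w / \<alpha>"
  using norm_le_norm_relaxed_filter[of "inv (relaxed_filter \<alpha> G) w"] \<alpha>_pos
  by (simp add: relaxed_filter_inv field_simps)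

lemma inv_relaxed_filter_G_commute:
  "inv (relaxed_filter \<alpha> G) (G w) = G (inv (relaxed_filter \<alpha> G) w)"
proof -
  have "G w = relaxed_filter \<alpha> G (G (inv (relaxed_filter \<alpha> G) w))"
    by (simp add: relaxed_filter_G_commute relaxed_filter_inv)
  then show ?thesis
    using inj_relaxed_filter by simp
qed

lemma norm_inv_relaxed_filter_G_le: "norm (inv (relaxed_filter \<alpha> G) (G w)) \<le> norm w"
  using norm_G_le_norm_relaxed_filter[of "inv (relaxed_filter \<alpha> G) w"]
  by (simp add: inv_relaxed_filter_G_commute relaxed_filter_inv)

lemma norm_diff_inv_relaxed_filter_G_le:
  "norm (w - inv (relaxed_filter \<alpha> G) (G w)) \<le> norm w"
proof -
  define v where "v = inv (relaxed_filter \<alpha> G) w"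
  have "w - inv (relaxed_filter \<alpha> G) (G w) = relaxed_filter \<alpha> G v - G v"
    by (simp add: v_def inv_relaxed_filter_G_commute relaxed_filter_inv)
  also have "\<dots> = \<alpha> *\<^sub>R (v - G v)"
    by (simp add: relaxed_filter_def algebra_simps)
  finally show ?thesis
    using norm_diff_G_le_norm_relaxed_filter[of v] \<alpha>_pos
    by (simp add: v_def relaxed_filter_inv)
qed

end

end

end

lemma surj_relaxed_filter:
  fixes G :: "'a::{real_inner, complete_space} \<Rightarrow> 'a"
  assumes "positive_contraction G" and "0 < \<alpha>" and "\<alpha> \<le> 1"
  shows "surj (relaxed_filter \<alpha> G)"
proof -
  interpret positive_contraction G by fact
  interpret linear G by (rule linear)
  have "\<exists>v. relaxed_filter \<alpha> G v = f" for f
  proof -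
    define S where "S v = f + (1 - \<alpha>) *\<^sub>R (v - G v)" for v
    have "dist (S x) (S y) \<le> (1 - \<alpha>) * dist x y" for x y
    proof -
      have "S x - S y = (1 - \<alpha>) *\<^sub>R ((x - y) - G (x - y))"
        by (simp add: S_def diff algebra_simps)
      then have "dist (S x) (S y) = (1 - \<alpha>) * norm ((x - y) - G (x - y))"
        using \<open>\<alpha> \<le> 1\<close> by (simp add: dist_norm)
      also have "\<dots> \<le> (1 - \<alpha>) * dist x y"
        using norm_diff_G_le \<open>\<alpha> \<le> 1\<close> by (simp add: dist_norm mult_left_mono)
      finally show ?thesis .
    qed
    then obtain v where "S v = v"
      using banach_fix_type[of "1 - \<alpha>" S] assms(2,3) by auto
    then have "relaxed_filter \<alpha> G v = f"
      by (simp add: S_def relaxed_filter_def algebra_simps)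
    then show ?thesis ..
  qed
  then show ?thesis
    by (metis surj_def)
qed

lemma positive_contraction_if_helmholtz_filter_like:
  assumes "helmholtz_filter_like G"
  shows "positive_contraction G"
  using assms unfolding helmholtz_filter_like_def positive_contraction_def
  by (simp add: bounded_linear.linear power2_norm_eq_inner inner_commute)

theorem mainTheorem2:
  fixes G :: "'a::{real_inner, complete_space} \<Rightarrow> 'a" and \<alpha> :: real
  assumes "helmholtz_filter_like G"
    and "0 < \<alpha>" and "\<alpha> \<le> 1"
  defines "A \<equiv> (\<lambda>v. (1 - \<alpha>) *\<^sub>R G v + \<alpha> *\<^sub>R v)"
  defines "D \<equiv> inv A"
  shows "bij A
    \<and> bounded_linear D
    \<and> bounded_linear (\<lambda>v. D (G v))
    \<and> bounded_linear (\<lambda>v. v - D (G v))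
    \<and> onorm D \<le> 1 / \<alpha>
    \<and> onorm (\<lambda>v. D (G v)) \<le> 1
    \<and> onorm (\<lambda>v. v - D (G v)) \<le> 1"
proof -
  have G: "positive_contraction G"
    using assms(1) by (rule positive_contraction_if_helmholtz_filter_like)
  interpret positive_contraction G by (rule G)
  have A: "A = relaxed_filter \<alpha> G"
    by (simp add: A_def relaxed_filter_def fun_eq_iff)
  have surj: "surj A"
    unfolding A using G assms(2,3) by (rule surj_relaxed_filter)
  have bij: "bij A"
    unfolding bij_def A using inj_relaxed_filter assms(2,3) surj A by blast
  have lin_D: "linear D"
    unfolding D_def A using linear_inv_relaxed_filter assms(2,3) surj A by blast
  have lin_DG: "linear (\<lambda>v. D (G v))"
    using linear_compose[OF linear lin_D] by (simp add: o_def)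
  have lin_I_DG: "linear (\<lambda>v. v - D (G v))"
    using linear_ident lin_DG by (rule linear_compose_sub)
  have D_le: "norm (D w) \<le> 1 / \<alpha> * norm w"
    and DG_le: "norm (D (G w)) \<le> 1 * norm w"
    and I_DG_le: "norm (w - D (G w)) \<le> 1 * norm w" for w
    using norm_inv_relaxed_filter_le norm_inv_relaxed_filter_G_le
      norm_diff_inv_relaxed_filter_G_le assms(2,3) surj
    unfolding D_def A by simp_all
  show ?thesis
    using bij bounded_linear_onorm_le[OF lin_D _ D_le] bounded_linear_onorm_le[OF lin_DG _ DG_le]
      bounded_linear_onorm_le[OF lin_I_DG _ I_DG_le] assms(2)
    by simp
qed

end
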